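(* Let $p$ be a state and let $r\in p^{TP}=\{Tp:T\in TP(d)\}$. Then $r$ lies on the boundary of $p^{TP}$, regarded as a subset of the affine hyperplane $\{x\in\mathbb{R}^d:\sum_i x_i=1\}$, if and only if at least one elbow of $\beta(r)$ lies on $\beta(p)$.
   Context: Fix $d\ge 2$, $\beta\in(0,\infty)$ and pairwise distinct reals $E_0=0,E_1,\dots,E_{d-1}$. Put $q_{m,n}=e^{-\beta(E_m-E_n)}$, $Z=\sum_j q_{j,0}$, $g_i=q_{i,0}/Z$. A state is a probability vector in $\mathbb{R}^d$. $TP(d)$ is the set of $d\times d$ real matrices with non-negative entries, columns summing to $1$, and $Tg=g$. For a state $p$ choose a permutation $\pi$ of $\{0,\dots,d-1\}$ with $p_{\pi(0)}/g_{\pi(0)}\ge\dots\ge p_{\pi(d-1)}/g_{\pi(d-1)}$; let $x_k=\sum_{i\le k}g_{\pi(i)}$, $y_k=\sum_{i\le k}p_{\pi(i)}$. The thermomajorization curve $\beta(p)$ is the graph of the concave piecewise-linear function on $[0,1]$ through $(0,0),(x_0,y_0),\dots,(x_{d-1},y_{d-1})=(1,1)$. The elbows of $\beta(p)$ are the points $(x_k,y_k)$ for $k=0,\dots,d-2$. A point $(x,y)$ lies on $\beta(p)$ if $y$ equals the value of that function at $x$. *)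

theory Defs
  imports "HOL-Analysis.Analysis"
begin

(* Vectors in R^d are encoded as functions nat => real, with coordinates 0..d-1;
   matrices as nat => nat => real (entries T i j, i,j < d). *)

definition qf :: "real \<Rightarrow> (nat \<Rightarrow> real) \<Rightarrow> nat \<Rightarrow> nat \<Rightarrow> real" where
  "qf \<beta> E m n = exp (- \<beta> * (E m - E n))"

definition Zf :: "nat \<Rightarrow> real \<Rightarrow> (nat \<Rightarrow> real) \<Rightarrow> real" where
  "Zf d \<beta> E = (\<Sum>j<d. qf \<beta> E j 0)"

definition gibbs :: "nat \<Rightarrow> real \<Rightarrow> (nat \<Rightarrow> real) \<Rightarrow> nat \<Rightarrow> real" where
  "gibbs d \<beta> E i = qf \<beta> E i 0 / Zf d \<beta> E"

definition is_state :: "nat \<Rightarrow> (nat \<Rightarrow> real) \<Rightarrow> bool" where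
  "is_state d p \<longleftrightarrow> (\<forall>i<d. 0 \<le> p i) \<and> (\<Sum>i<d. p i) = 1 \<and> (\<forall>i\<ge>d. p i = 0)"

definition TP :: "nat \<Rightarrow> (nat \<Rightarrow> real) \<Rightarrow> (nat \<Rightarrow> nat \<Rightarrow> real) set" where
  "TP d g = {T. (\<forall>i<d. \<forall>j<d. 0 \<le> T i j) \<and> (\<forall>j<d. (\<Sum>i<d. T i j) = 1)
                 \<and> (\<forall>i<d. (\<Sum>j<d. T i j * g j) = g i)}"

definition mat_app :: "nat \<Rightarrow> (nat \<Rightarrow> nat \<Rightarrow> real) \<Rightarrow> (nat \<Rightarrow> real) \<Rightarrow> nat \<Rightarrow> real" where
  "mat_app d T p = (\<lambda>i. if i < d then (\<Sum>j<d. T i j * p j) else 0)"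

definition TP_orbit :: "nat \<Rightarrow> (nat \<Rightarrow> real) \<Rightarrow> (nat \<Rightarrow> real) \<Rightarrow> (nat \<Rightarrow> real) set" where
  "TP_orbit d g p = {mat_app d T p | T. T \<in> TP d g}"

definition hyperplane1 :: "nat \<Rightarrow> (nat \<Rightarrow> real) set" where
  "hyperplane1 d = {x. (\<forall>i\<ge>d. x i = 0) \<and> (\<Sum>i<d. x i) = 1}"

definition thermo_order :: "nat \<Rightarrow> (nat \<Rightarrow> real) \<Rightarrow> (nat \<Rightarrow> real) \<Rightarrow> (nat \<Rightarrow> nat) \<Rightarrow> bool" where
  "thermo_order d g p \<pi> \<longleftrightarrow> \<pi> permutes {..<d} \<and>
     (\<forall>i j. i \<le> j \<and> j < d \<longrightarrow> p (\<pi> j) / g (\<pi> j) \<le> p (\<pi> i) / g (\<pi> i))"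

(* cumulative sums: cum f pi k = sum_{i<k} f(pi i); so (x_k,y_k) = (cum g pi (k+1), cum p pi (k+1)),
   and cum _ _ 0 = 0 gives the origin *)
definition cum :: "(nat \<Rightarrow> real) \<Rightarrow> (nat \<Rightarrow> nat) \<Rightarrow> nat \<Rightarrow> real" where
  "cum f \<pi> k = (\<Sum>i<k. f (\<pi> i))"

definition on_curve :: "nat \<Rightarrow> (nat \<Rightarrow> real) \<Rightarrow> (nat \<Rightarrow> real) \<Rightarrow> (nat \<Rightarrow> nat) \<Rightarrow> real \<Rightarrow> real \<Rightarrow> bool" where
  "on_curve d g p \<pi> x y \<longleftrightarrow> (\<exists>k<d. cum g \<pi> k \<le> x \<and> x \<le> cum g \<pi> (Suc k) \<and>
      y = cum p \<pi> k + (cum p \<pi> (Suc k) - cum p \<pi> k) / (cum g \<pi> (Suc k) - cum g \<pi> k) * (x - cum g \<pi> k))"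

(* some elbow (x_k,y_k), k = 0..d-2, of beta(r) (w.r.t. ordering pr) lies on beta(p) (w.r.t. ordering pp) *)
definition elbow_on_curve :: "nat \<Rightarrow> (nat \<Rightarrow> real) \<Rightarrow> (nat \<Rightarrow> real) \<Rightarrow> (nat \<Rightarrow> nat) \<Rightarrow> (nat \<Rightarrow> real) \<Rightarrow> (nat \<Rightarrow> nat) \<Rightarrow> bool" where
  "elbow_on_curve d g r \<pi>r p \<pi>p \<longleftrightarrow>
     (\<exists>k. k + 2 \<le> d \<and> on_curve d g p \<pi>p (cum g \<pi>r (Suc k)) (cum r \<pi>r (Suc k)))"

end

theory Submission
  imports Defs
begin

(*
  Write beta(q) for the thermomajorization curve of q. It is the lower envelope of the lines
  x \<mapsto> c x + (\<Sum>l. g l (q l / g l - c)\<^sup>+), and the orbit p^TP is exactly the set of states r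
  with r(S) \<le> beta(p)(g(S)) for every set S of levels. Necessity is a computation with the
  column sums of T; sufficiency is a transport argument: the levels of p are laid out as
  consecutive bins ordered by p l / g l, and the rows of T are split off one at a time, each
  taking a window of these bins that the intermediate value theorem adjusts to the right value.

  The constraints for S = {} and S = {..<d} hold with equality on the whole hyperplane, so r is
  interior iff the constraints for all proper nonempty S are strict. If the constraint for S is
  tight, r(S) lies below the segment of beta(r) above g(S), whose endpoints lie below the line of
  beta(p) through (g(S), r(S)); hence an endpoint that is an elbow of beta(r) lies on beta(p).
  Conversely the levels below an elbow on beta(p) form a tight S, and moving mass into S leaves
  the orbit.
*)

section \<open>Transport plans from support bounds\<close>

text \<open>Pouring mass \<open>t\<close> into bins of capacities \<open>w 0, w 1, \<dots>\<close> in this order,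
  \<open>fill w t j\<close> is what lands in bin \<open>j\<close>.\<close>

definition fill :: "(nat \<Rightarrow> real) \<Rightarrow> real \<Rightarrow> nat \<Rightarrow> real" where
  "fill w t j = min (w j) (max 0 (t - (\<Sum>i<j. w i)))"

lemma fill_mono: "t \<le> t' \<Longrightarrow> fill w t j \<le> fill w t' j"
  by (auto simp: fill_def min_def max_def)

lemma fill_le: "fill w t j \<le> w j"
  by (simp add: fill_def)

context
  fixes w :: "nat \<Rightarrow> real"
  assumes w_nonneg: "\<And>j. 0 \<le> w j"
begin

lemma sum_w_mono: "i \<le> j \<Longrightarrow> (\<Sum>l<i. w l) \<le> (\<Sum>l<j. w l)"
  using w_nonneg by (intro sum_mono2) auto

lemma fill_nonneg: "0 \<le> fill w t j"
  using w_nonneg by (simp add: fill_def)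

lemma fill_zero: "fill w 0 j = 0"
  using w_nonneg sum_nonneg[of "{..<j}" w] by (simp add: fill_def)

lemma sum_fill: "(\<Sum>j<n. fill w t j) = min (\<Sum>j<n. w j) (max 0 t)"
proof (induction n)
  case (Suc n)
  have "0 \<le> (\<Sum>i<n. w i)" "0 \<le> w n"
    using w_nonneg by (auto intro: sum_nonneg)
  with Suc show ?case by (simp add: fill_def min_def max_def)
qed simp

lemma fill_full: "j < n \<Longrightarrow> (\<Sum>i<n. w i) \<le> t \<Longrightarrow> fill w t j = w j"
  using sum_w_mono[of "Suc j" n] w_nonneg by (simp add: fill_def)

lemma fill_eq_0_after:
  assumes "fill w t a < w a" "a < j"
  shows "fill w t j = 0"
proof -
  have "t \<le> (\<Sum>i<j. w i)"
    using assms sum_w_mono[of "Suc a" j] by (auto simp: fill_def min_def max_def split: if_splits)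
  then show ?thesis using w_nonneg by (simp add: fill_def)
qed

lemma fill_eq_full_before: "0 < fill w t b \<Longrightarrow> j < b \<Longrightarrow> fill w t j = w j"
  using sum_w_mono[of "Suc j" b] w_nonneg by (auto simp: fill_def min_def max_def split: if_splits)

text \<open>The witness \<open>c\<close> is the value of the last bin reached by the mass \<open>t\<close>.\<close>

lemma fill_attains_support_bound:
  fixes \<rho> :: "nat \<Rightarrow> real"
  assumes \<rho>_antimono: "\<And>i j. i \<le> j \<Longrightarrow> j < n \<Longrightarrow> \<rho> j \<le> \<rho> i"
  shows "\<exists>c. (\<Sum>j<n. \<rho> j * fill w t j) = c * (\<Sum>j<n. fill w t j) + (\<Sum>j<n. w j * max 0 (\<rho> j - c))"
proof (cases "n = 0")
  case False
  define k where "k = Max ({j. j < n \<and> (\<Sum>i<j. w i) < t} \<union> {0})"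
  have "k < n" using False by (auto simp: k_def)
  have before: "fill w t j = w j" if "j < k" for j
  proof -
    have "(\<Sum>i<k. w i) < t"
      using Max_in[of "{j. j < n \<and> (\<Sum>i<j. w i) < t} \<union> {0}"] that by (auto simp: k_def)
    then show ?thesis using sum_w_mono[of "Suc j" k] that w_nonneg by (simp add: fill_def)
  qed
  have after: "fill w t j = 0" if "k < j" "j < n" for j
  proof -
    have "\<not> (\<Sum>i<j. w i) < t" using that Max_ge[of _ j] by (force simp: k_def)
    then show ?thesis using w_nonneg by (simp add: fill_def)
  qed
  have "\<rho> j * fill w t j = \<rho> k * fill w t j + w j * max 0 (\<rho> j - \<rho> k)" if "j < n" for j
    using before[of j] after[of j] \<rho>_antimono[of j k] \<rho>_antimono[of k j] \<open>k < n\<close> that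
    by (cases j k rule: linorder_cases) (auto simp: algebra_simps)
  then have "(\<Sum>j<n. \<rho> j * fill w t j) = (\<Sum>j<n. \<rho> k * fill w t j + w j * max 0 (\<rho> j - \<rho> k))"
    by (intro sum.cong) auto
  then show ?thesis by (auto simp: sum.distrib sum_distrib_left)
qed simp

lemma fill_window_separated:
  fixes u m :: real and \<rho> :: "nat \<Rightarrow> real"
  assumes \<rho>_antimono: "\<And>i j. i \<le> j \<Longrightarrow> j < n \<Longrightarrow> \<rho> j \<le> \<rho> i"
  defines "\<nu> \<equiv> \<lambda>j. fill w (u + m) j - fill w u j"
  obtains L H where "\<And>j. j < n \<Longrightarrow> 0 < \<nu> j \<Longrightarrow> L \<le> \<rho> j \<and> \<rho> j \<le> H"
    and "\<And>j. j < n \<Longrightarrow> \<nu> j < w j \<Longrightarrow> H \<le> \<rho> j \<or> \<rho> j \<le> L"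
proof (cases "\<exists>j<n. 0 < \<nu> j")
  case False
  then show ?thesis using that[of 0 0] by force
next
  case True
  define P where "P = {j. j < n \<and> 0 < \<nu> j}"
  have "finite P" "P \<noteq> {}" using True by (auto simp: P_def)
  define a where "a = Min P"
  define b where "b = Max P"
  have "a \<in> P" "b \<in> P" using \<open>finite P\<close> \<open>P \<noteq> {}\<close> by (simp_all add: a_def b_def)
  have inside: "\<rho> b \<le> \<rho> j \<and> \<rho> j \<le> \<rho> a" if "j \<in> P" for j
    using that \<open>b \<in> P\<close> \<open>finite P\<close> by (auto simp: a_def b_def P_def intro!: \<rho>_antimono)
  have outside: "\<rho> a \<le> \<rho> j \<or> \<rho> j \<le> \<rho> b" if "j < n" "\<nu> j < w j" for j
  proof (rule ccontr)
    assume "\<not> (\<rho> a \<le> \<rho> j \<or> \<rho> j \<le> \<rho> b)"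
    then have "a < j" "j < b"
      using \<rho>_antimono[of j a] \<rho>_antimono[of b j] \<open>a \<in> P\<close> \<open>b \<in> P\<close> that(1)
      by (auto simp: P_def not_less[symmetric])
    have "fill w u a < w a"
      using \<open>a \<in> P\<close> fill_le[of w "u + m" a] by (simp add: P_def \<nu>_def)
    then have "fill w u j = 0" using fill_eq_0_after \<open>a < j\<close> by blast
    have "0 < fill w (u + m) b"
      using \<open>b \<in> P\<close> fill_nonneg[of u b] by (simp add: P_def \<nu>_def)
    then have "fill w (u + m) j = w j" using fill_eq_full_before \<open>j < b\<close> by blast
    with \<open>fill w u j = 0\<close> that(2) show False by (simp add: \<nu>_def)
  qed
  show ?thesis using that[of "\<rho> b" "\<rho> a"] inside outside by (auto simp: P_def)
qed

text \<open>By the two support bounds the top window (\<open>u = 0\<close>) carries value at least \<open>s\<close> and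
  the bottom one (\<open>u = G\<close>) at most \<open>s\<close>.\<close>

lemma fill_window_with_value:
  fixes \<rho> :: "nat \<Rightarrow> real"
  assumes \<rho>_antimono: "\<And>i j. i \<le> j \<Longrightarrow> j < n \<Longrightarrow> \<rho> j \<le> \<rho> i"
    and "0 \<le> m" "0 \<le> G" and sum_w: "(\<Sum>j<n. w j) = m + G"
    and sum_w\<rho>: "(\<Sum>j<n. w j * \<rho> j) = s + s'"
    and bound_s: "\<And>c. s \<le> c * m + (\<Sum>j<n. w j * max 0 (\<rho> j - c))"
    and bound_s': "\<And>c. s' \<le> c * G + (\<Sum>j<n. w j * max 0 (\<rho> j - c))"
  obtains u where "0 \<le> u" "u \<le> G" "(\<Sum>j<n. (fill w (u + m) j - fill w u j) * \<rho> j) = s"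
proof -
  define f where "f u = (\<Sum>j<n. (fill w (u + m) j - fill w u j) * \<rho> j)" for u
  have sum_fill_eq: "(\<Sum>j<n. fill w t j) = t" if "0 \<le> t" "t \<le> m + G" for t
    using sum_fill[where n=n and t=t] sum_w that by simp
  have "s \<le> f 0"
  proof -
    obtain c where "(\<Sum>j<n. \<rho> j * fill w m j)
        = c * (\<Sum>j<n. fill w m j) + (\<Sum>j<n. w j * max 0 (\<rho> j - c))"
      using fill_attains_support_bound[where \<rho>=\<rho> and n=n] \<rho>_antimono by blast
    then show ?thesis using bound_s[of c] sum_fill_eq[of m] \<open>0 \<le> m\<close> \<open>0 \<le> G\<close>
      by (simp add: f_def fill_zero mult.commute)
  qed
  moreover have "f G \<le> s"
  proof -
    obtain c where "(\<Sum>j<n. \<rho> j * fill w G j)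
        = c * (\<Sum>j<n. fill w G j) + (\<Sum>j<n. w j * max 0 (\<rho> j - c))"
      using fill_attains_support_bound[where \<rho>=\<rho> and n=n] \<rho>_antimono by blast
    then have "s' \<le> (\<Sum>j<n. fill w G j * \<rho> j)"
      using bound_s'[of c] sum_fill_eq[of G] \<open>0 \<le> m\<close> \<open>0 \<le> G\<close> by (simp add: mult.commute)
    moreover have "(\<Sum>j<n. fill w (G + m) j * \<rho> j) = (\<Sum>j<n. w j * \<rho> j)"
      using fill_full sum_w by (intro sum.cong) (auto simp: add.commute)
    ultimately show ?thesis using sum_w\<rho> by (simp add: f_def sum_subtractf left_diff_distrib)
  qed
  moreover have "continuous_on {0..G} f"
    unfolding f_def fill_def by (intro continuous_intros)
  ultimately obtain u where "0 \<le> u" "u \<le> G" "f u = s"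
    using IVT2'[of f G s 0] \<open>0 \<le> G\<close> by blast
  then show ?thesis using that by (simp add: f_def)
qed

end

lemma min_endpoints_le_affine:
  fixes B :: "real \<Rightarrow> real"
  assumes affine: "\<And>x. L \<le> x \<Longrightarrow> x \<le> H \<Longrightarrow> B x = \<alpha> * x + \<beta>" and "L \<le> c" "c \<le> H"
  shows "min (B L) (B H) \<le> B c"
proof (cases "0 \<le> \<alpha>")
  case True
  then have "\<alpha> * L \<le> \<alpha> * c" using \<open>L \<le> c\<close> by (simp add: mult_left_mono)
  then show ?thesis using affine[of L] affine[of c] \<open>L \<le> c\<close> \<open>c \<le> H\<close> by simp
next
  case False
  then have "\<alpha> * H \<le> \<alpha> * c" using \<open>c \<le> H\<close> by (simp add: mult_left_mono_neg)
  then show ?thesis using affine[of H] affine[of c] \<open>L \<le> c\<close> \<open>c \<le> H\<close> by simp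
qed

text \<open>Between \<open>L\<close> and \<open>H\<close> the window has used up every bin, so the remaining excess is
  affine there.\<close>

lemma sum_remaining_excess_affine:
  fixes w \<nu> \<rho> :: "'a \<Rightarrow> real"
  assumes "finite A"
    and \<nu>_bounds: "\<And>j. j \<in> A \<Longrightarrow> 0 \<le> \<nu> j \<and> \<nu> j \<le> w j"
    and outside: "\<And>j. j \<in> A \<Longrightarrow> \<nu> j < w j \<Longrightarrow> H \<le> \<rho> j \<or> \<rho> j \<le> L"
    and "L \<le> x" "x \<le> H"
  defines "P \<equiv> {j\<in>A. H \<le> \<rho> j}"
  shows "(\<Sum>j\<in>A. (w j - \<nu> j) * max 0 (\<rho> j - x))
    = (\<Sum>j\<in>P. (w j - \<nu> j) * \<rho> j) - x * (\<Sum>j\<in>P. w j - \<nu> j)"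
proof -
  have "(\<Sum>j\<in>A. (w j - \<nu> j) * max 0 (\<rho> j - x))
      = (\<Sum>j\<in>A. if j \<in> P then (w j - \<nu> j) * (\<rho> j - x) else 0)"
  proof (intro sum.cong refl)
    fix j assume "j \<in> A"
    then show "(w j - \<nu> j) * max 0 (\<rho> j - x) = (if j \<in> P then (w j - \<nu> j) * (\<rho> j - x) else 0)"
      using outside[of j] \<nu>_bounds[of j] \<open>L \<le> x\<close> \<open>x \<le> H\<close> by (cases "\<nu> j < w j") (auto simp: P_def)
  qed
  also have "\<dots> = (\<Sum>j\<in>P. (w j - \<nu> j) * (\<rho> j - x))"
    using \<open>finite A\<close> by (simp add: sum.If_cases P_def Int_def)
  also have "\<dots> = (\<Sum>j\<in>P. (w j - \<nu> j) * \<rho> j) - x * (\<Sum>j\<in>P. w j - \<nu> j)"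
    by (simp add: sum_distrib_left sum_subtractf[symmetric] algebra_simps)
  finally show ?thesis .
qed

lemma support_bound_remove_window:
  fixes w \<nu> \<rho> :: "'a \<Rightarrow> real"
  assumes "finite A"
    and \<nu>_bounds: "\<And>j. j \<in> A \<Longrightarrow> 0 \<le> \<nu> j \<and> \<nu> j \<le> w j"
    and sum_\<nu>: "(\<Sum>j\<in>A. \<nu> j) = m" and sum_\<nu>\<rho>: "(\<Sum>j\<in>A. \<nu> j * \<rho> j) = s"
    and inside: "\<And>j. j \<in> A \<Longrightarrow> 0 < \<nu> j \<Longrightarrow> L \<le> \<rho> j \<and> \<rho> j \<le> H"
    and outside: "\<And>j. j \<in> A \<Longrightarrow> \<nu> j < w j \<Longrightarrow> H \<le> \<rho> j \<or> \<rho> j \<le> L"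
    and bound: "\<forall>e. a \<le> e * b + (\<Sum>j\<in>A. w j * max 0 (\<rho> j - e))"
    and bound_with: "\<forall>e. a + s \<le> e * (b + m) + (\<Sum>j\<in>A. w j * max 0 (\<rho> j - e))"
  shows "a \<le> c * b + (\<Sum>j\<in>A. (w j - \<nu> j) * max 0 (\<rho> j - c))"
proof -
  define B where "B c = c * b + (\<Sum>j\<in>A. (w j - \<nu> j) * max 0 (\<rho> j - c)) - a" for c
  have B_eq: "B c = c * b + (\<Sum>j\<in>A. w j * max 0 (\<rho> j - c))
      - (\<Sum>j\<in>A. \<nu> j * max 0 (\<rho> j - c)) - a" for c
    by (simp add: B_def sum_subtractf left_diff_distrib)
  have above: "0 \<le> B c" if "H \<le> c" for c
  proof -
    have "(\<Sum>j\<in>A. \<nu> j * max 0 (\<rho> j - c)) = 0"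
      using inside \<nu>_bounds that by (intro sum.neutral ballI) (force simp: less_le)
    then show ?thesis using bound B_eq[of c] by simp
  qed
  have below: "0 \<le> B c" if "c \<le> L" for c
  proof -
    have "(\<Sum>j\<in>A. \<nu> j * max 0 (\<rho> j - c)) = (\<Sum>j\<in>A. \<nu> j * \<rho> j - c * \<nu> j)"
      using inside \<nu>_bounds that by (intro sum.cong refl) (force simp: less_le algebra_simps)
    also have "\<dots> = s - c * m"
      using sum_\<nu> sum_\<nu>\<rho> by (simp add: sum_subtractf sum_distrib_left[symmetric])
    moreover have "a + s \<le> c * b + c * m + (\<Sum>j\<in>A. w j * max 0 (\<rho> j - c))"
      using bound_with by (simp add: distrib_left)
    ultimately show ?thesis using B_eq[of c] by linarith
  qed
  have "0 \<le> B c"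
  proof (cases "H \<le> c \<or> c \<le> L")
    case False
    define P where "P = {j\<in>A. H \<le> \<rho> j}"
    have "B x = (b - (\<Sum>j\<in>P. w j - \<nu> j)) * x + ((\<Sum>j\<in>P. (w j - \<nu> j) * \<rho> j) - a)"
      if "L \<le> x" "x \<le> H" for x
      using sum_remaining_excess_affine[OF \<open>finite A\<close> \<nu>_bounds outside that]
      by (simp add: B_def P_def algebra_simps)
    then have "min (B L) (B H) \<le> B c"
      using False by (intro min_endpoints_le_affine) auto
    then show ?thesis using above[of H] below[of L] by simp
  qed (use above below in auto)
  then show ?thesis by (simp add: B_def)
qed

lemma split_off_row:
  fixes w \<rho> :: "nat \<Rightarrow> real"
  assumes w_nonneg: "\<And>j. 0 \<le> w j"
    and \<rho>_antimono: "\<And>i j. i \<le> j \<Longrightarrow> j < n \<Longrightarrow> \<rho> j \<le> \<rho> i"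
    and "0 \<le> m" "0 \<le> G" and sum_w: "(\<Sum>j<n. w j) = m + G"
    and sum_w\<rho>: "(\<Sum>j<n. w j * \<rho> j) = s + s'"
    and bound_s: "\<And>c. s \<le> c * m + (\<Sum>j<n. w j * max 0 (\<rho> j - c))"
    and bound_s': "\<And>c. s' \<le> c * G + (\<Sum>j<n. w j * max 0 (\<rho> j - c))"
  obtains \<nu> where "\<And>j. 0 \<le> \<nu> j" "\<And>j. \<nu> j \<le> w j"
    and "(\<Sum>j<n. \<nu> j) = m" "(\<Sum>j<n. \<nu> j * \<rho> j) = s"
    and "\<And>a b c. \<forall>e. a \<le> e * b + (\<Sum>j<n. w j * max 0 (\<rho> j - e)) \<Longrightarrow>
           \<forall>e. a + s \<le> e * (b + m) + (\<Sum>j<n. w j * max 0 (\<rho> j - e)) \<Longrightarrow>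
           a \<le> c * b + (\<Sum>j<n. (w j - \<nu> j) * max 0 (\<rho> j - c))"
proof -
  obtain u where u: "0 \<le> u" "u \<le> G" "(\<Sum>j<n. (fill w (u + m) j - fill w u j) * \<rho> j) = s"
    using fill_window_with_value[where w=w and \<rho>=\<rho> and n=n,
        OF w_nonneg \<rho>_antimono \<open>0 \<le> m\<close> \<open>0 \<le> G\<close> sum_w sum_w\<rho> bound_s bound_s'] by blast
  define \<nu> where "\<nu> j = fill w (u + m) j - fill w u j" for j
  have \<nu>_nonneg: "0 \<le> \<nu> j" for j
    using fill_mono[of u "u + m" w j] \<open>0 \<le> m\<close> by (simp add: \<nu>_def)
  have \<nu>_le: "\<nu> j \<le> w j" for j
    using fill_le[of w "u + m" j] fill_nonneg[where w=w and t=u and j=j, OF w_nonneg]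
    by (simp add: \<nu>_def)
  have sum_\<nu>: "(\<Sum>j<n. \<nu> j) = m"
    using sum_fill[where w=w and n=n, OF w_nonneg] sum_w u \<open>0 \<le> m\<close>
    by (simp add: \<nu>_def sum_subtractf)
  have sum_\<nu>\<rho>: "(\<Sum>j<n. \<nu> j * \<rho> j) = s"
    using u(3) by (simp add: \<nu>_def)
  obtain L H where "\<And>j. j < n \<Longrightarrow> 0 < \<nu> j \<Longrightarrow> L \<le> \<rho> j \<and> \<rho> j \<le> H"
    and "\<And>j. j < n \<Longrightarrow> \<nu> j < w j \<Longrightarrow> H \<le> \<rho> j \<or> \<rho> j \<le> L"
    using fill_window_separated[where w=w and \<rho>=\<rho> and n=n and u=u and m=m, OF w_nonneg \<rho>_antimono]
    unfolding \<nu>_def by blast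
  then show ?thesis
    using that[OF \<nu>_nonneg \<nu>_le sum_\<nu> sum_\<nu>\<rho>] \<nu>_nonneg \<nu>_le sum_\<nu> sum_\<nu>\<rho>
      support_bound_remove_window[of "{..<n}" \<nu> w m \<rho> s L H]
    by simp
qed

definition transport_plan :: "'i set \<Rightarrow> nat \<Rightarrow> ('i \<Rightarrow> real) \<Rightarrow> (nat \<Rightarrow> real) \<Rightarrow> (nat \<Rightarrow> real)
    \<Rightarrow> ('i \<Rightarrow> real) \<Rightarrow> ('i \<Rightarrow> nat \<Rightarrow> real) \<Rightarrow> bool" where
  "transport_plan I n g w \<rho> s M \<longleftrightarrow>
    (\<forall>i\<in>I. \<forall>j<n. 0 \<le> M i j) \<and> (\<forall>i\<in>I. (\<Sum>j<n. M i j) = g i) \<and>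
    (\<forall>j<n. (\<Sum>i\<in>I. M i j) = w j) \<and> (\<forall>i\<in>I. (\<Sum>j<n. M i j * \<rho> j) = s i)"

lemma transport_plan_insert:
  assumes "transport_plan I n g (\<lambda>j. w j - \<nu> j) \<rho> s M" "finite I" "i0 \<notin> I"
    and "\<And>j. 0 \<le> \<nu> j" "(\<Sum>j<n. \<nu> j) = g i0" "(\<Sum>j<n. \<nu> j * \<rho> j) = s i0"
  shows "transport_plan (insert i0 I) n g w \<rho> s (M(i0 := \<nu>))"
proof -
  have "(\<Sum>i\<in>insert i0 I. (M(i0 := \<nu>)) i j) = \<nu> j + (\<Sum>i\<in>I. M i j)" for j
    using assms(2,3) by (auto intro: sum.cong)
  then show ?thesis using assms by (auto simp: transport_plan_def)
qed

lemma transport_plan_exists: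
  fixes w \<rho> :: "nat \<Rightarrow> real" and g s :: "'i \<Rightarrow> real"
  assumes "finite I" and g_nonneg: "\<And>i. i \<in> I \<Longrightarrow> 0 \<le> g i"
    and \<rho>_antimono: "\<And>i j. i \<le> j \<Longrightarrow> j < n \<Longrightarrow> \<rho> j \<le> \<rho> i"
    and "\<And>j. 0 \<le> w j"
    and "(\<Sum>j<n. w j) = (\<Sum>i\<in>I. g i)" and "(\<Sum>j<n. w j * \<rho> j) = (\<Sum>i\<in>I. s i)"
    and "\<And>S c. S \<subseteq> I \<Longrightarrow> (\<Sum>i\<in>S. s i) \<le> c * (\<Sum>i\<in>S. g i) + (\<Sum>j<n. w j * max 0 (\<rho> j - c))"
  shows "\<exists>M. transport_plan I n g w \<rho> s M"
  using assms(1,2,4-)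
proof (induction I arbitrary: w rule: finite_induct)
  case empty
  then have "\<forall>j<n. w j = 0" using sum_nonneg_eq_0_iff[of "{..<n}" w] by auto
  then show ?case by (auto simp: transport_plan_def)
next
  case (insert i0 I)
  have bound: "(\<Sum>i\<in>S. s i) \<le> c * (\<Sum>i\<in>S. g i) + (\<Sum>j<n. w j * max 0 (\<rho> j - c))"
    if "S \<subseteq> insert i0 I" for S c
    using insert.prems(5) that by blast
  have "0 \<le> g i0" "0 \<le> (\<Sum>i\<in>I. g i)"
    using insert.prems(1) by (auto intro: sum_nonneg)
  moreover have "(\<Sum>j<n. w j) = g i0 + (\<Sum>i\<in>I. g i)" "(\<Sum>j<n. w j * \<rho> j) = s i0 + (\<Sum>i\<in>I. s i)"
    using insert.prems(3,4) insert.hyps by simp_all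
  moreover have "s i0 \<le> c * g i0 + (\<Sum>j<n. w j * max 0 (\<rho> j - c))" for c
    using bound[of "{i0}" c] by simp
  ultimately obtain \<nu> where \<nu>: "\<And>j. 0 \<le> \<nu> j" "\<And>j. \<nu> j \<le> w j"
      "(\<Sum>j<n. \<nu> j) = g i0" "(\<Sum>j<n. \<nu> j * \<rho> j) = s i0"
    and rest: "\<And>a b c. \<forall>e. a \<le> e * b + (\<Sum>j<n. w j * max 0 (\<rho> j - e)) \<Longrightarrow>
           \<forall>e. a + s i0 \<le> e * (b + g i0) + (\<Sum>j<n. w j * max 0 (\<rho> j - e)) \<Longrightarrow>
           a \<le> c * b + (\<Sum>j<n. (w j - \<nu> j) * max 0 (\<rho> j - c))"
    using split_off_row[where w=w and \<rho>=\<rho> and n=n, OF insert.prems(2) \<rho>_antimono]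
      bound[of I] by blast
  have "\<exists>M. transport_plan I n g (\<lambda>j. w j - \<nu> j) \<rho> s M"
  proof (rule insert.IH)
    show "(\<Sum>j<n. w j - \<nu> j) = (\<Sum>i\<in>I. g i)" "(\<Sum>j<n. (w j - \<nu> j) * \<rho> j) = (\<Sum>i\<in>I. s i)"
      using insert.prems(3,4) insert.hyps \<nu> by (simp_all add: sum_subtractf left_diff_distrib)
    show "(\<Sum>i\<in>S. s i) \<le> c * (\<Sum>i\<in>S. g i) + (\<Sum>j<n. (w j - \<nu> j) * max 0 (\<rho> j - c))"
      if "S \<subseteq> I" for S c
    proof (rule rest)
      have "finite S" "i0 \<notin> S" using that insert.hyps finite_subset by auto
      then show "\<forall>e. (\<Sum>i\<in>S. s i) + s i0 \<le> e * ((\<Sum>i\<in>S. g i) + g i0) + (\<Sum>j<n. w j * max 0 (\<rho> j - e))"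
        using bound[of "insert i0 S"] that by (auto simp: algebra_simps)
      show "\<forall>e. (\<Sum>i\<in>S. s i) \<le> e * (\<Sum>i\<in>S. g i) + (\<Sum>j<n. w j * max 0 (\<rho> j - e))"
        using bound that by blast
    qed
  qed (use insert.prems \<nu> in auto)
  then obtain M where "transport_plan I n g (\<lambda>j. w j - \<nu> j) \<rho> s M" ..
  then show ?case using transport_plan_insert[OF _ insert.hyps] \<nu>(1,3,4) by blast
qed

section \<open>Thermomajorization curves\<close>

text \<open>\<open>beta(q)\<close> is the minimum over \<open>c\<close> of the lines \<open>support_line d g q c\<close>;
  \<open>segment_line g q \<pi> k\<close> is the line through its \<open>k\<close>-th segment.\<close>

definition support_line :: "nat \<Rightarrow> (nat \<Rightarrow> real) \<Rightarrow> (nat \<Rightarrow> real) \<Rightarrow> real \<Rightarrow> real \<Rightarrow> real" where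
  "support_line d g q c x = c * x + (\<Sum>l<d. g l * max 0 (q l / g l - c))"

definition segment_line :: "(nat \<Rightarrow> real) \<Rightarrow> (nat \<Rightarrow> real) \<Rightarrow> (nat \<Rightarrow> nat) \<Rightarrow> nat \<Rightarrow> real \<Rightarrow> real" where
  "segment_line g q \<pi> k x = cum q \<pi> k + q (\<pi> k) / g (\<pi> k) * (x - cum g \<pi> k)"

lemma cum_Suc: "cum f \<pi> (Suc k) = cum f \<pi> k + f (\<pi> k)"
  by (simp add: cum_def)

lemma on_curve_iff_segment_line:
  "on_curve d g q \<pi> x y \<longleftrightarrow>
    (\<exists>k<d. cum g \<pi> k \<le> x \<and> x \<le> cum g \<pi> (Suc k) \<and> y = segment_line g q \<pi> k x)"
  by (simp add: on_curve_def segment_line_def cum_Suc)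

lemma cum_eq_sum_image: "\<pi> permutes {..<d} \<Longrightarrow> cum f \<pi> j = sum f (\<pi> ` {..<j})"
  by (simp add: cum_def sum.reindex permutes_inj[THEN inj_on_subset])

lemma permutes_image_lessThan_subset:
  fixes \<pi> :: "nat \<Rightarrow> nat"
  assumes "\<pi> permutes {..<d}" "j \<le> d"
  shows "\<pi> ` {..<j} \<subseteq> {..<d}"
proof -
  have "\<pi> ` {..<j} \<subseteq> \<pi> ` {..<d}" using assms(2) by (intro image_mono) auto
  then show ?thesis using permutes_image[OF assms(1)] by simp
qed

lemma sum_permutes_lessThan: "\<pi> permutes {..<d} \<Longrightarrow> (\<Sum>j<d. f (\<pi> j)) = (\<Sum>l<d. f l)"
  using sum.permute[of \<pi> "{..<d}" f] by (simp add: comp_def)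

lemma sum_lessThan_if_less:
  fixes a :: "nat \<Rightarrow> real"
  assumes "k \<le> d"
  shows "(\<Sum>j<d. if j < k then a j else 0) = (\<Sum>j<k. a j)"
proof -
  have "{..<d} \<inter> {..<k} = {..<k}" using assms by auto
  then show ?thesis using sum.inter_restrict[of "{..<d}" a "{..<k}"] by simp
qed

lemma sum_prefix_and_point:
  fixes a :: "nat \<Rightarrow> real"
  assumes "k < d"
  shows "(\<Sum>j<d. if j < k then a j else if j = k then b else 0) = (\<Sum>j<k. a j) + b"
proof -
  have "(\<Sum>j<d. if j < k then a j else if j = k then b else 0)
      = (\<Sum>j<d. if j < k then a j else 0) + (\<Sum>j<d. if j = k then b else 0)"
    by (subst sum.distrib[symmetric]) (intro sum.cong, auto)
  then show ?thesis using assms sum_lessThan_if_less[of k d a] by simp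
qed

lemma sum_mult_le_support_bound:
  fixes v w \<rho> :: "'a \<Rightarrow> real"
  assumes "finite A" and "\<And>l. l \<in> A \<Longrightarrow> 0 \<le> v l \<and> v l \<le> w l"
  shows "(\<Sum>l\<in>A. v l * \<rho> l) \<le> c * (\<Sum>l\<in>A. v l) + (\<Sum>l\<in>A. w l * max 0 (\<rho> l - c))"
proof -
  have "v l * \<rho> l \<le> c * v l + w l * max 0 (\<rho> l - c)" if "l \<in> A" for l
  proof (cases "c \<le> \<rho> l")
    case True
    then have "v l * (\<rho> l - c) \<le> w l * (\<rho> l - c)"
      using assms(2) that by (intro mult_right_mono) auto
    then show ?thesis using True by (simp add: algebra_simps)
  next
    case False
    then have "v l * (\<rho> l - c) \<le> 0" using assms(2) that by (intro mult_nonneg_nonpos) auto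
    then show ?thesis using False by (simp add: algebra_simps)
  qed
  then have "(\<Sum>l\<in>A. v l * \<rho> l) \<le> (\<Sum>l\<in>A. c * v l + w l * max 0 (\<rho> l - c))"
    by (intro sum_mono)
  then show ?thesis by (simp add: sum.distrib sum_distrib_left)
qed

lemma segment_line_interpolate:
  "(a + b) * segment_line g q \<pi> m x
    = b * segment_line g q \<pi> m (x - a) + a * segment_line g q \<pi> m (x + b)"
proof -
  define s where "s = q (\<pi> m) / g (\<pi> m)"
  show ?thesis unfolding segment_line_def s_def[symmetric] by (simp add: algebra_simps)
qed

lemma segment_line_at_cum: "segment_line g q \<pi> k (cum g \<pi> k) = cum q \<pi> k"
  by (simp add: segment_line_def)

lemma segment_line_at_cum_Suc:
  "g (\<pi> k) \<noteq> 0 \<Longrightarrow> segment_line g q \<pi> k (cum g \<pi> (Suc k)) = cum q \<pi> (Suc k)"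
  by (simp add: segment_line_def cum_Suc)

locale positive_weights =
  fixes d :: nat and g :: "nat \<Rightarrow> real"
  assumes g_pos: "\<And>l. l < d \<Longrightarrow> 0 < g l"
    and sum_g: "(\<Sum>l<d. g l) = 1"
begin

lemma g_nonzero: "l < d \<Longrightarrow> g l \<noteq> 0"
  using g_pos by force

lemma sum_g_nonneg: "S \<subseteq> {..<d} \<Longrightarrow> 0 \<le> sum g S"
  using g_pos by (intro sum_nonneg) (auto simp: less_imp_le)

lemma sum_g_le_1: "S \<subseteq> {..<d} \<Longrightarrow> sum g S \<le> 1"
  using g_pos sum_g sum_mono2[of "{..<d}" S g] by (force simp: less_imp_le)

lemma sum_g_pos: "S \<subseteq> {..<d} \<Longrightarrow> S \<noteq> {} \<Longrightarrow> 0 < sum g S"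
  using g_pos by (intro sum_pos) (auto intro: finite_subset)

lemma sum_g_proper_subset_bounds:
  assumes "S \<subseteq> {..<d}" "S \<noteq> {}" "S \<noteq> {..<d}"
  shows "0 < sum g S" "sum g S < 1"
proof -
  have "0 < sum g ({..<d} - S)" using sum_g_pos assms by auto
  moreover have "sum g ({..<d} - S) = 1 - sum g S" using assms(1) sum_g by (simp add: sum_diff)
  ultimately show "0 < sum g S" "sum g S < 1" using sum_g_pos assms by simp_all
qed

lemma cum_g_full: "\<pi> permutes {..<d} \<Longrightarrow> cum g \<pi> d = 1"
  using sum_permutes_lessThan[of \<pi> d g] sum_g by (simp add: cum_def)

lemma cum_g_bounds:
  assumes "\<pi> permutes {..<d}" "j \<le> d"
  shows "0 \<le> cum g \<pi> j" "cum g \<pi> j \<le> 1"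
  using sum_g_nonneg sum_g_le_1 permutes_image_lessThan_subset[OF assms]
  by (simp_all add: cum_eq_sum_image[OF assms(1)])

lemma segment_exists:
  assumes "\<pi> permutes {..<d}" "0 \<le> x" "x \<le> 1"
  obtains k where "k < d" "cum g \<pi> k \<le> x" "x \<le> cum g \<pi> (Suc k)"
proof -
  define K where "K = {k. k < d \<and> cum g \<pi> k \<le> x}"
  define k where "k = Max K"
  have "0 < d" using sum_g by (cases d) auto
  then have "0 \<in> K" "finite K" using \<open>0 \<le> x\<close> by (auto simp: K_def cum_def)
  then have "k \<in> K" unfolding k_def by (metis Max_in empty_iff)
  then have k: "k < d" "cum g \<pi> k \<le> x" by (simp_all add: K_def)
  have "x \<le> cum g \<pi> (Suc k)"
  proof (cases "Suc k < d")
    case True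
    then have "Suc k \<notin> K" using Max_ge[OF \<open>finite K\<close>, of "Suc k"] by (auto simp: k_def)
    then show ?thesis using True by (simp add: K_def)
  next
    case False
    then have "Suc k = d" using k(1) by linarith
    then show ?thesis using cum_g_full[OF assms(1)] \<open>x \<le> 1\<close> by simp
  qed
  with k that show ?thesis by blast
qed

lemma segment_endpoint_cases:
  assumes \<pi>: "\<pi> permutes {..<d}" and "2 \<le> d" "0 < x" "x < 1"
    and k: "k < d" "cum g \<pi> k \<le> x" "x \<le> cum g \<pi> (Suc k)"
  shows "cum g \<pi> k < x \<and> Suc k < d \<or> x < cum g \<pi> (Suc k) \<and> 1 \<le> k"
proof (cases "cum g \<pi> k < x \<and> Suc k < d")
  case False
  have "k \<noteq> 0"
  proof
    assume "k = 0"
    then have "cum g \<pi> k < x \<and> Suc k < d" using \<open>0 < x\<close> \<open>2 \<le> d\<close> by (simp add: cum_def)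
    with False show False by blast
  qed
  moreover have "x < cum g \<pi> (Suc k)"
  proof (cases "Suc k < d")
    case True
    then have "x = cum g \<pi> k" using False k(2) by simp
    then show ?thesis using g_pos permutes_in_image[OF \<pi>] k(1) by (simp add: cum_Suc)
  next
    case False
    then have "Suc k = d" using k(1) by simp
    then show ?thesis using cum_g_full[OF \<pi>] \<open>x < 1\<close> by simp
  qed
  ultimately show ?thesis by simp
qed simp

lemma sum_weights_le_support_line:
  assumes "\<And>l. l < d \<Longrightarrow> 0 \<le> v l \<and> v l \<le> g l"
  shows "(\<Sum>l<d. v l * (q l / g l)) \<le> support_line d g q c (\<Sum>l<d. v l)"
  using sum_mult_le_support_bound[of "{..<d}" v g "\<lambda>l. q l / g l" c] assms
  by (simp add: support_line_def)

lemma sum_mat_app_le_support_line: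
  assumes T: "T \<in> TP d g" and S: "S \<subseteq> {..<d}"
  shows "sum (mat_app d T q) S \<le> support_line d g q c (sum g S)"
proof -
  define v where "v l = (\<Sum>i\<in>S. T i l) * g l" for l
  have "sum (mat_app d T q) S = (\<Sum>l<d. v l * (q l / g l))"
  proof -
    have "sum (mat_app d T q) S = (\<Sum>i\<in>S. \<Sum>l<d. T i l * q l)"
      using S by (intro sum.cong) (auto simp: mat_app_def)
    also have "\<dots> = (\<Sum>l<d. (\<Sum>i\<in>S. T i l) * q l)"
      by (subst sum.swap) (simp add: sum_distrib_right)
    also have "\<dots> = (\<Sum>l<d. v l * (q l / g l))"
      by (intro sum.cong) (auto simp: v_def g_nonzero)
    finally show ?thesis .
  qed
  moreover have "sum g S = (\<Sum>l<d. v l)"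
  proof -
    have "sum g S = (\<Sum>i\<in>S. \<Sum>l<d. T i l * g l)"
      using S T by (intro sum.cong) (auto simp: TP_def)
    then show ?thesis by (subst (asm) sum.swap) (simp add: v_def sum_distrib_right)
  qed
  moreover have "(\<Sum>l<d. v l * (q l / g l)) \<le> support_line d g q c (\<Sum>l<d. v l)"
  proof (rule sum_weights_le_support_line)
    fix l assume "l < d"
    have "0 \<le> (\<Sum>i\<in>S. T i l)" using T S \<open>l < d\<close> by (intro sum_nonneg) (auto simp: TP_def)
    moreover have "(\<Sum>i\<in>S. T i l) \<le> (\<Sum>i<d. T i l)"
      using T S \<open>l < d\<close> by (intro sum_mono2) (auto simp: TP_def)
    ultimately show "0 \<le> v l \<and> v l \<le> g l"
      using T \<open>l < d\<close> g_pos[OF \<open>l < d\<close>] by (auto simp: v_def TP_def mult_le_cancel_right1)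
  qed
  ultimately show ?thesis by (simp only:)
qed

lemma sum_le_support_line:
  assumes S: "S \<subseteq> {..<d}"
  shows "sum q S \<le> support_line d g q c (sum g S)"
proof -
  define v where "v l = (if l \<in> S then g l else 0)" for l
  have "(\<Sum>l<d. v l * (q l / g l)) = (\<Sum>l<d. if l \<in> S then q l else 0)"
    by (intro sum.cong) (auto simp: v_def g_nonzero)
  moreover have "(\<Sum>l<d. v l) = (\<Sum>l<d. if l \<in> S then g l else 0)"
    by (simp add: v_def)
  ultimately have "(\<Sum>l<d. v l * (q l / g l)) = sum q S" "(\<Sum>l<d. v l) = sum g S"
    using S sum.inter_restrict[of "{..<d}" q S] sum.inter_restrict[of "{..<d}" g S]
    by (simp_all add: Int_absorb1)
  moreover have "(\<Sum>l<d. v l * (q l / g l)) \<le> support_line d g q c (\<Sum>l<d. v l)"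
    using g_pos by (intro sum_weights_le_support_line) (simp add: v_def less_imp_le)
  ultimately show ?thesis by (simp only:)
qed

context
  fixes q :: "nat \<Rightarrow> real" and \<pi> :: "nat \<Rightarrow> nat"
  assumes order: "thermo_order d g q \<pi>"
begin

lemma order_permutes: "\<pi> permutes {..<d}"
  using order by (simp add: thermo_order_def)

lemma order_antimono: "i \<le> j \<Longrightarrow> j < d \<Longrightarrow> q (\<pi> j) / g (\<pi> j) \<le> q (\<pi> i) / g (\<pi> i)"
  using order by (simp add: thermo_order_def)

lemma g_pos_order: "j < d \<Longrightarrow> 0 < g (\<pi> j)"
  using g_pos permutes_in_image[OF order_permutes] by simp

lemma g_order_nonzero: "j < d \<Longrightarrow> g (\<pi> j) \<noteq> 0"
  using g_pos_order by force

lemma support_line_at_slope: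
  assumes k: "k < d"
  shows "support_line d g q (q (\<pi> k) / g (\<pi> k)) x = segment_line g q \<pi> k x"
proof -
  define c where "c = q (\<pi> k) / g (\<pi> k)"
  have "(\<Sum>l<d. g l * max 0 (q l / g l - c)) = (\<Sum>j<d. g (\<pi> j) * max 0 (q (\<pi> j) / g (\<pi> j) - c))"
    using sum_permutes_lessThan[OF order_permutes, of "\<lambda>l. g l * max 0 (q l / g l - c)"] by simp
  also have "\<dots> = (\<Sum>j<d. if j < k then q (\<pi> j) - c * g (\<pi> j) else 0)"
  proof (intro sum.cong refl)
    fix j assume "j \<in> {..<d}"
    show "g (\<pi> j) * max 0 (q (\<pi> j) / g (\<pi> j) - c) = (if j < k then q (\<pi> j) - c * g (\<pi> j) else 0)"
    proof (cases "j < k")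
      case True
      then have "c \<le> q (\<pi> j) / g (\<pi> j)" using order_antimono[of j k] k by (simp add: c_def)
      then show ?thesis
        using True g_order_nonzero[of j] \<open>j \<in> {..<d}\<close> by (simp add: right_diff_distrib mult.commute)
    next
      case False
      then have "q (\<pi> j) / g (\<pi> j) \<le> c"
        using order_antimono[of k j] \<open>j \<in> {..<d}\<close> by (simp add: c_def)
      then show ?thesis using False by simp
    qed
  qed
  also have "\<dots> = cum q \<pi> k - c * cum g \<pi> k"
    using k sum_lessThan_if_less[of k d] by (simp add: cum_def sum_subtractf sum_distrib_left)
  finally show ?thesis
    unfolding support_line_def segment_line_def c_def[symmetric] by (simp add: algebra_simps)
qed

lemma segment_line_le_support_line:
  assumes k: "k < d" and x: "cum g \<pi> k \<le> x" "x \<le> cum g \<pi> (Suc k)"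
  shows "segment_line g q \<pi> k x \<le> support_line d g q c x"
proof -
  define v where "v j = (if j < k then g (\<pi> j) else if j = k then x - cum g \<pi> k else 0)" for j
  define \<rho> where "\<rho> j = q (\<pi> j) / g (\<pi> j)" for j
  have "(\<Sum>j<d. v j) = x"
    using sum_prefix_and_point[OF k, of "\<lambda>j. g (\<pi> j)"] by (simp add: v_def cum_def)
  moreover have "(\<Sum>j<d. v j * \<rho> j) = segment_line g q \<pi> k x"
  proof -
    have "(\<Sum>j<d. v j * \<rho> j)
        = (\<Sum>j<d. if j < k then q (\<pi> j) else if j = k then (x - cum g \<pi> k) * \<rho> k else 0)"
      by (intro sum.cong) (auto simp: v_def \<rho>_def g_order_nonzero)
    then show ?thesis
      using sum_prefix_and_point[OF k, of "\<lambda>j. q (\<pi> j)"]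
      by (simp add: segment_line_def cum_def \<rho>_def)
  qed
  moreover have "(\<Sum>j<d. g (\<pi> j) * max 0 (\<rho> j - c)) = (\<Sum>l<d. g l * max 0 (q l / g l - c))"
    using sum_permutes_lessThan[OF order_permutes] by (simp add: \<rho>_def)
  moreover have "(\<Sum>j<d. v j * \<rho> j) \<le> c * (\<Sum>j<d. v j) + (\<Sum>j<d. g (\<pi> j) * max 0 (\<rho> j - c))"
    using g_pos_order[THEN less_imp_le] x
    by (intro sum_mult_le_support_bound) (auto simp: v_def cum_Suc)
  ultimately show ?thesis unfolding support_line_def by (simp only:)
qed

lemma segment_line_le_segment_line:
  assumes "m < d" "cum g \<pi> m \<le> x" "x \<le> cum g \<pi> (Suc m)" "k < d"
  shows "segment_line g q \<pi> m x \<le> segment_line g q \<pi> k x"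
  using segment_line_le_support_line[OF assms(1-3), of "q (\<pi> k) / g (\<pi> k)"]
    support_line_at_slope[OF assms(4)] by simp

lemma sum_mat_app_le_segment_line:
  assumes "T \<in> TP d g" "S \<subseteq> {..<d}" "k < d"
  shows "sum (mat_app d T q) S \<le> segment_line g q \<pi> k (sum g S)"
  using sum_mat_app_le_support_line[OF assms(1,2), of q "q (\<pi> k) / g (\<pi> k)"]
    support_line_at_slope[OF assms(3)] by simp

lemma sum_le_segment_line:
  assumes "S \<subseteq> {..<d}" "k < d"
  shows "sum q S \<le> segment_line g q \<pi> k (sum g S)"
  using sum_le_support_line[OF assms(1), of q "q (\<pi> k) / g (\<pi> k)"]
    support_line_at_slope[OF assms(2)] by simp

lemma TP_orbit_of_transport_plan:
  assumes "transport_plan {..<d} d g (\<lambda>j. g (\<pi> j)) (\<lambda>j. q (\<pi> j) / g (\<pi> j)) x M"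
    and x_zero: "\<And>i. d \<le> i \<Longrightarrow> x i = 0"
  shows "x \<in> TP_orbit d g q"
proof -
  have M_nonneg: "\<And>i j. i < d \<Longrightarrow> j < d \<Longrightarrow> 0 \<le> M i j"
    and M_rows: "\<And>i. i < d \<Longrightarrow> (\<Sum>j<d. M i j) = g i"
    and M_cols: "\<And>j. j < d \<Longrightarrow> (\<Sum>i<d. M i j) = g (\<pi> j)"
    and M_values: "\<And>i. i < d \<Longrightarrow> (\<Sum>j<d. M i j * (q (\<pi> j) / g (\<pi> j))) = x i"
    using assms(1) by (simp_all add: transport_plan_def)
  note perm = order_permutes
  define T where "T i l = M i (inv \<pi> l) / g l" for i l
  have inv_lt: "inv \<pi> l < d" if "l < d" for l
    using permutes_in_image[OF permutes_inv[OF perm]] that by simp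
  have \<pi>_inv: "\<pi> (inv \<pi> l) = l" for l using permutes_inverses(1)[OF perm] .
  have "T \<in> TP d g"
    unfolding TP_def
  proof (intro CollectI conjI allI impI)
    fix i l assume "i < d" "l < d"
    then show "0 \<le> T i l" using M_nonneg inv_lt g_pos by (simp add: T_def less_imp_le)
  next
    fix l assume "l < d"
    then show "(\<Sum>i<d. T i l) = 1"
      using M_cols[OF inv_lt] g_nonzero by (simp add: T_def \<pi>_inv flip: sum_divide_distrib)
  next
    fix i assume "i < d"
    have "(\<Sum>l<d. T i l * g l) = (\<Sum>l<d. M i (inv \<pi> l))"
      by (intro sum.cong) (auto simp: T_def g_nonzero)
    also have "\<dots> = g i"
      using sum_permutes_lessThan[OF permutes_inv[OF perm], of "M i"] M_rows \<open>i < d\<close> by simp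
    finally show "(\<Sum>l<d. T i l * g l) = g i" .
  qed
  moreover have "mat_app d T q = x"
  proof
    fix i
    have "(\<Sum>l<d. T i l * q l) = (\<Sum>j<d. M i j * (q (\<pi> j) / g (\<pi> j)))"
      using sum_permutes_lessThan[OF perm, of "\<lambda>l. T i l * q l"]
      by (simp add: T_def permutes_inverses(2)[OF perm])
    then show "mat_app d T q i = x i" using M_values x_zero by (simp add: mat_app_def)
  qed
  ultimately show ?thesis unfolding TP_orbit_def by blast
qed

lemma mem_TP_orbit_if_support_bounds:
  assumes sum_q: "(\<Sum>l<d. q l) = 1"
    and x_zero: "\<And>i. d \<le> i \<Longrightarrow> x i = 0" and sum_x: "(\<Sum>i<d. x i) = 1"
    and bounds: "\<And>S c. S \<subseteq> {..<d} \<Longrightarrow> sum x S \<le> support_line d g q c (sum g S)"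
  shows "x \<in> TP_orbit d g q"
proof -
  note perm = order_permutes
  define \<rho> where "\<rho> j = q (\<pi> j) / g (\<pi> j)" for j
  define w where "w j = (if j < d then g (\<pi> j) else 0)" for j
  have "\<exists>M. transport_plan {..<d} d g w \<rho> x M"
  proof (rule transport_plan_exists)
    show "0 \<le> g i" if "i \<in> {..<d}" for i using g_pos that by (simp add: less_imp_le)
    show "\<rho> j \<le> \<rho> i" if "i \<le> j" "j < d" for i j using order_antimono[OF that] by (simp add: \<rho>_def)
    show "0 \<le> w j" for j using g_pos_order by (simp add: w_def less_imp_le)
    show "(\<Sum>j<d. w j) = (\<Sum>i\<in>{..<d}. g i)"
      using sum_permutes_lessThan[OF perm, of g] by (simp add: w_def)
    have "(\<Sum>j<d. w j * \<rho> j) = (\<Sum>j<d. q (\<pi> j))"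
      by (intro sum.cong) (auto simp: w_def \<rho>_def g_order_nonzero)
    then show "(\<Sum>j<d. w j * \<rho> j) = (\<Sum>i\<in>{..<d}. x i)"
      using sum_permutes_lessThan[OF perm, of q] sum_q sum_x by simp
    have "(\<Sum>j<d. w j * max 0 (\<rho> j - c)) = (\<Sum>l<d. g l * max 0 (q l / g l - c))" for c
      using sum_permutes_lessThan[OF perm, of "\<lambda>l. g l * max 0 (q l / g l - c)"]
      by (simp add: w_def \<rho>_def)
    then show "(\<Sum>i\<in>S. x i) \<le> c * (\<Sum>i\<in>S. g i) + (\<Sum>j<d. w j * max 0 (\<rho> j - c))"
      if "S \<subseteq> {..<d}" for S c
      using bounds[OF that, of c] by (simp add: support_line_def)
  qed simp
  then obtain M where "transport_plan {..<d} d g w \<rho> x M" by blast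
  then have "transport_plan {..<d} d g (\<lambda>j. g (\<pi> j)) (\<lambda>j. q (\<pi> j) / g (\<pi> j)) x M"
    by (simp add: transport_plan_def w_def \<rho>_def)
  then show ?thesis using TP_orbit_of_transport_plan x_zero by blast
qed

end

end

section \<open>The boundary of the thermal orbit\<close>

lemma interior_of_hyperplane1_sum_increase:
  assumes r: "r \<in> subtopology euclidean (hyperplane1 d) interior_of A"
    and "finite S" "a \<in> S" "a < d" "b \<notin> S" "b < d"
  obtains y where "y \<in> A" "sum r S < sum y S"
proof -
  obtain U where U: "openin (subtopology euclidean (hyperplane1 d)) U" "r \<in> U" "U \<subseteq> A"
    using r by (auto simp: interior_of_def)
  then obtain V where V: "open V" "U = V \<inter> hyperplane1 d" by (auto simp: openin_open)
  define e where "e i = (if i = a then 1 else 0) - (if i = b then 1 else (0::real))" for i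
  define f where "f t = (\<lambda>i. r i + t * e i)" for t :: real
  have "continuous_on UNIV f"
    unfolding f_def by (intro continuous_on_coordinatewise_then_product continuous_intros)
  then have "open (f -` V)" using open_vimage[OF V(1)] by blast
  moreover have "0 \<in> f -` V" using U(2) V(2) by (simp add: f_def)
  ultimately obtain \<epsilon> where "\<epsilon> > 0" "ball 0 \<epsilon> \<subseteq> f -` V" using open_contains_ball by blast
  define t where "t = \<epsilon> / 2"
  have "t > 0" "t \<in> ball 0 \<epsilon>" using \<open>\<epsilon> > 0\<close> by (simp_all add: t_def)
  then have "f t \<in> V" using \<open>ball 0 \<epsilon> \<subseteq> f -` V\<close> by blast
  have sum_e: "(\<Sum>i<d. e i) = 0" "(\<Sum>i\<in>S. e i) = 1"
    using \<open>a < d\<close> \<open>b < d\<close> \<open>finite S\<close> \<open>a \<in> S\<close> \<open>b \<notin> S\<close>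
    by (auto simp: e_def sum_subtractf sum.delta)
  have "f t \<in> hyperplane1 d"
    using U(2) V(2) sum_e(1) \<open>a < d\<close> \<open>b < d\<close>
    by (auto simp: hyperplane1_def f_def e_def sum.distrib simp flip: sum_distrib_left)
  then have "f t \<in> A" using \<open>f t \<in> V\<close> U(3) V(2) by blast
  moreover have "sum (f t) S = sum r S + t"
    using sum_e(2) by (simp add: f_def sum.distrib flip: sum_distrib_left)
  ultimately show ?thesis using that \<open>t > 0\<close> by simp
qed

lemma interior_of_hyperplane1_if_strict_bounds:
  assumes "r \<in> hyperplane1 d" "finite F"
    and "\<And>S. S \<in> F \<Longrightarrow> sum r S < b S"
    and "\<And>y. y \<in> hyperplane1 d \<Longrightarrow> (\<And>S. S \<in> F \<Longrightarrow> sum y S < b S) \<Longrightarrow> y \<in> A"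
  shows "r \<in> subtopology euclidean (hyperplane1 d) interior_of A"
proof -
  define U where "U = hyperplane1 d \<inter> (\<Inter>S\<in>F. {y. sum y S < b S})"
  have "open (\<Inter>S\<in>F. {y :: nat \<Rightarrow> real. sum y S < b S})"
    using \<open>finite F\<close>
    by (intro open_INT ballI open_Collect_less continuous_intros continuous_on_product_coordinates)
  then have "openin (subtopology euclidean (hyperplane1 d)) U"
    by (auto simp: U_def openin_open)
  moreover have "r \<in> U" "U \<subseteq> A" using assms by (auto simp: U_def)
  ultimately show ?thesis by (auto simp: interior_of_def)
qed

locale thermo_orbit = positive_weights +
  fixes p r :: "nat \<Rightarrow> real" and \<pi>p \<pi>r :: "nat \<Rightarrow> nat"
  assumes sum_p: "(\<Sum>l<d. p l) = 1"
    and r_orbit: "r \<in> TP_orbit d g p"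
    and order_p: "thermo_order d g p \<pi>p"
    and order_r: "thermo_order d g r \<pi>r"
begin

definition tight_subset :: "nat set \<Rightarrow> bool" where
  "tight_subset S \<longleftrightarrow> S \<subseteq> {..<d} \<and> S \<noteq> {} \<and> S \<noteq> {..<d} \<and> on_curve d g p \<pi>p (sum g S) (sum r S)"

lemma r_hyperplane1: "r \<in> hyperplane1 d"
proof -
  obtain T where T: "T \<in> TP d g" "r = mat_app d T p" using r_orbit by (auto simp: TP_orbit_def)
  have "(\<Sum>i<d. r i) = (\<Sum>j<d. (\<Sum>i<d. T i j) * p j)"
    using T(2) by (simp add: mat_app_def sum_distrib_right) (rule sum.swap)
  also have "\<dots> = 1" using T(1) sum_p by (simp add: TP_def)
  finally show ?thesis using T(2) by (simp add: hyperplane1_def mat_app_def)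
qed

lemma sum_r_le_segment_line: "S \<subseteq> {..<d} \<Longrightarrow> k < d \<Longrightarrow> sum r S \<le> segment_line g p \<pi>p k (sum g S)"
  using r_orbit sum_mat_app_le_segment_line[OF order_p] by (auto simp: TP_orbit_def)

lemma cum_r_le_segment_line:
  "j \<le> d \<Longrightarrow> k < d \<Longrightarrow> cum r \<pi>r j \<le> segment_line g p \<pi>p k (cum g \<pi>r j)"
  using sum_r_le_segment_line[OF permutes_image_lessThan_subset[OF order_permutes[OF order_r]]]
  by (simp add: cum_eq_sum_image[OF order_permutes[OF order_r]])

lemma elbow_if_cum_r_on_segment_line:
  assumes j: "1 \<le> j" "j < d" and "m < d"
    and touch: "segment_line g p \<pi>p m (cum g \<pi>r j) \<le> cum r \<pi>r j"
  shows "elbow_on_curve d g r \<pi>r p \<pi>p"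
proof -
  define x where "x = cum g \<pi>r j"
  have "0 \<le> x" "x \<le> 1" using cum_g_bounds[OF order_permutes[OF order_r]] j by (simp_all add: x_def)
  then obtain m' where m': "m' < d" "cum g \<pi>p m' \<le> x" "x \<le> cum g \<pi>p (Suc m')"
    using segment_exists[OF order_permutes[OF order_p]] by blast
  have "cum r \<pi>r j \<le> segment_line g p \<pi>p m' x"
    using cum_r_le_segment_line[OF _ m'(1)] j by (simp add: x_def)
  moreover have "segment_line g p \<pi>p m' x \<le> segment_line g p \<pi>p m x"
    using segment_line_le_segment_line[OF order_p m' \<open>m < d\<close>] .
  ultimately have "cum r \<pi>r j = segment_line g p \<pi>p m' x" using touch by (simp add: x_def)
  then have "on_curve d g p \<pi>p (cum g \<pi>r (Suc (j - 1))) (cum r \<pi>r (Suc (j - 1)))"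
    using m' j by (auto simp: on_curve_iff_segment_line x_def)
  then show ?thesis using j by (auto simp: elbow_on_curve_def intro!: exI[of _ "j - 1"])
qed

lemma elbow_if_tight_subset:
  assumes "tight_subset S"
  shows "elbow_on_curve d g r \<pi>r p \<pi>p"
proof -
  define x where "x = sum g S"
  have S: "S \<subseteq> {..<d}" "S \<noteq> {}" "S \<noteq> {..<d}" and "on_curve d g p \<pi>p x (sum r S)"
    using assms by (simp_all add: tight_subset_def x_def)
  then obtain m where m: "m < d" "sum r S = segment_line g p \<pi>p m x"
    by (auto simp: on_curve_iff_segment_line)
  have "0 < x" "x < 1" using sum_g_proper_subset_bounds[OF S] by (simp_all add: x_def)
  obtain i i' where "i \<in> S" "i' \<in> {..<d} - S" using S by blast
  then have "2 \<le> d" using S(1) by (cases i; cases i') auto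
  obtain k where k: "k < d" "cum g \<pi>r k \<le> x" "x \<le> cum g \<pi>r (Suc k)"
    using segment_exists[OF order_permutes[OF order_r], of x] \<open>0 < x\<close> \<open>x < 1\<close> by auto
  define a b where "a = x - cum g \<pi>r k" and "b = cum g \<pi>r (Suc k) - x"
  define gap where "gap j = segment_line g p \<pi>p m (cum g \<pi>r j) - cum r \<pi>r j" for j
  have "0 \<le> a" "0 \<le> b" using k by (simp_all add: a_def b_def)
  have "0 \<le> gap k" "0 \<le> gap (Suc k)"
    using cum_r_le_segment_line[OF _ m(1)] k(1) by (simp_all add: gap_def)
  have "b * segment_line g p \<pi>p m (cum g \<pi>r k) + a * segment_line g p \<pi>p m (cum g \<pi>r (Suc k))
      = (a + b) * sum r S"
    using segment_line_interpolate[of a b g p \<pi>p m x] by (simp add: a_def b_def m(2))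
  also have "\<dots> \<le> (a + b) * segment_line g r \<pi>r k x"
    using sum_le_segment_line[OF order_r S(1) k(1)] \<open>0 \<le> a\<close> \<open>0 \<le> b\<close>
    by (simp add: mult_left_mono x_def)
  also have "\<dots> = b * cum r \<pi>r k + a * cum r \<pi>r (Suc k)"
    using segment_line_interpolate[of a b g r \<pi>r k x] g_order_nonzero[OF order_r k(1)]
    by (simp add: a_def b_def segment_line_at_cum segment_line_at_cum_Suc)
  finally have "b * gap k + a * gap (Suc k) \<le> 0" by (simp add: gap_def right_diff_distrib)
  moreover have "0 \<le> b * gap k" "0 \<le> a * gap (Suc k)"
    using \<open>0 \<le> gap k\<close> \<open>0 \<le> gap (Suc k)\<close> \<open>0 \<le> a\<close> \<open>0 \<le> b\<close> by simp_all
  ultimately have "b * gap k = 0" "a * gap (Suc k) = 0" by linarith+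
  moreover have "0 < a \<and> Suc k < d \<or> 0 < b \<and> 1 \<le> k"
    using segment_endpoint_cases[OF order_permutes[OF order_r] \<open>2 \<le> d\<close> \<open>0 < x\<close> \<open>x < 1\<close> k]
    by (simp add: a_def b_def)
  ultimately have "gap (Suc k) = 0 \<and> Suc k < d \<or> gap k = 0 \<and> 1 \<le> k" by auto
  then show ?thesis
    using elbow_if_cum_r_on_segment_line[of "Suc k" m] elbow_if_cum_r_on_segment_line[of k m] m(1) k(1)
    by (auto simp: gap_def)
qed

lemma tight_subset_if_elbow:
  assumes "elbow_on_curve d g r \<pi>r p \<pi>p"
  obtains S where "tight_subset S"
proof -
  obtain e where e: "e + 2 \<le> d" "on_curve d g p \<pi>p (cum g \<pi>r (Suc e)) (cum r \<pi>r (Suc e))"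
    using assms by (auto simp: elbow_on_curve_def)
  have perm: "\<pi>r permutes {..<d}" by (rule order_permutes[OF order_r])
  define S where "S = \<pi>r ` {..<Suc e}"
  have "S \<subseteq> {..<d}" using permutes_image_lessThan_subset[OF perm] e(1) by (simp add: S_def)
  moreover have "\<pi>r 0 \<in> S" by (simp add: S_def)
  moreover have "\<pi>r (d - 1) \<notin> S"
  proof
    assume "\<pi>r (d - 1) \<in> S"
    then obtain i where "i < Suc e" "\<pi>r (d - 1) = \<pi>r i" by (auto simp: S_def)
    then have "d - 1 = i" using permutes_inj[OF perm] by (simp add: inj_eq)
    then show False using \<open>i < Suc e\<close> e(1) by simp
  qed
  moreover have "\<pi>r (d - 1) \<in> {..<d}" using permutes_in_image[OF perm] e(1) by simp
  ultimately have "S \<subseteq> {..<d}" "S \<noteq> {}" "S \<noteq> {..<d}" by auto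
  moreover have "sum g S = cum g \<pi>r (Suc e)" "sum r S = cum r \<pi>r (Suc e)"
    using cum_eq_sum_image[OF perm] by (simp_all add: S_def)
  ultimately have "tight_subset S" using e(2) by (simp add: tight_subset_def)
  then show thesis by (rule that)
qed

lemma elbow_on_curve_iff_tight_subset: "elbow_on_curve d g r \<pi>r p \<pi>p \<longleftrightarrow> (\<exists>S. tight_subset S)"
  using tight_subset_if_elbow elbow_if_tight_subset by blast

lemma not_interior_if_tight_subset:
  assumes "tight_subset S"
  shows "r \<notin> subtopology euclidean (hyperplane1 d) interior_of TP_orbit d g p"
proof
  assume interior: "r \<in> subtopology euclidean (hyperplane1 d) interior_of TP_orbit d g p"
  have S: "S \<subseteq> {..<d}" "S \<noteq> {}" "S \<noteq> {..<d}" and "on_curve d g p \<pi>p (sum g S) (sum r S)"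
    using assms by (simp_all add: tight_subset_def)
  then obtain m where m: "m < d" "sum r S = segment_line g p \<pi>p m (sum g S)"
    by (auto simp: on_curve_iff_segment_line)
  have "finite S" using S(1) by (rule finite_subset) simp
  obtain a b where "a \<in> S" "b \<in> {..<d} - S" using S by blast
  then have "a < d" "b \<notin> S" "b < d" using S(1) by auto
  obtain y where "y \<in> TP_orbit d g p" "sum r S < sum y S"
    using interior_of_hyperplane1_sum_increase[OF interior \<open>finite S\<close> \<open>a \<in> S\<close> \<open>a < d\<close>]
      \<open>b \<notin> S\<close> \<open>b < d\<close> by blast
  then obtain T where "T \<in> TP d g" "sum r S < sum (mat_app d T p) S"
    unfolding TP_orbit_def by blast
  then show False
    using sum_mat_app_le_segment_line[OF order_p \<open>T \<in> TP d g\<close> S(1) m(1)] m(2) by simp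
qed

lemma support_slack_if_not_on_curve:
  assumes S: "S \<subseteq> {..<d}" and not_on: "\<not> on_curve d g p \<pi>p (sum g S) (sum r S)"
  obtains b where "sum r S < b" "\<And>c. b \<le> support_line d g p c (sum g S)"
proof -
  have "0 \<le> sum g S" "sum g S \<le> 1" using S by (simp_all add: sum_g_nonneg sum_g_le_1)
  then obtain m where m: "m < d" "cum g \<pi>p m \<le> sum g S" "sum g S \<le> cum g \<pi>p (Suc m)"
    using segment_exists[OF order_permutes[OF order_p]] by blast
  then have "sum r S \<noteq> segment_line g p \<pi>p m (sum g S)"
    using not_on unfolding on_curve_iff_segment_line by blast
  then have "sum r S < segment_line g p \<pi>p m (sum g S)"
    using sum_r_le_segment_line[OF S m(1)] by simp
  then show ?thesis using that segment_line_le_support_line[OF order_p m] by blast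
qed

lemma interior_if_no_tight_subset:
  assumes "\<nexists>S. tight_subset S"
  shows "r \<in> subtopology euclidean (hyperplane1 d) interior_of TP_orbit d g p"
proof -
  define F where "F = {S. S \<subseteq> {..<d} \<and> S \<noteq> {} \<and> S \<noteq> {..<d}}"
  have "finite F" by (rule finite_subset[of _ "Pow {..<d}"]) (auto simp: F_def)
  have "\<forall>S\<in>F. \<exists>b. sum r S < b \<and> (\<forall>c. b \<le> support_line d g p c (sum g S))"
  proof
    fix S assume "S \<in> F"
    then have "S \<subseteq> {..<d}" "\<not> on_curve d g p \<pi>p (sum g S) (sum r S)"
      using assms[unfolded not_ex, rule_format, of S] by (simp_all add: tight_subset_def F_def)
    then show "\<exists>b. sum r S < b \<and> (\<forall>c. b \<le> support_line d g p c (sum g S))"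
      by (rule support_slack_if_not_on_curve) blast
  qed
  then obtain b where "\<forall>S\<in>F. sum r S < b S \<and> (\<forall>c. b S \<le> support_line d g p c (sum g S))"
    by (rule bchoice[THEN exE])
  then have b: "\<And>S. S \<in> F \<Longrightarrow> sum r S < b S"
    "\<And>S c. S \<in> F \<Longrightarrow> b S \<le> support_line d g p c (sum g S)"
    by simp_all
  show ?thesis
  proof (rule interior_of_hyperplane1_if_strict_bounds[OF r_hyperplane1 \<open>finite F\<close> b(1)])
    fix y assume y: "y \<in> hyperplane1 d" and strict: "\<And>S. S \<in> F \<Longrightarrow> sum y S < b S"
    show "y \<in> TP_orbit d g p"
    proof (rule mem_TP_orbit_if_support_bounds[OF order_p sum_p])
      show "\<And>i. d \<le> i \<Longrightarrow> y i = 0" "(\<Sum>i<d. y i) = 1" using y by (auto simp: hyperplane1_def)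
      show "sum y S \<le> support_line d g p c (sum g S)" if "S \<subseteq> {..<d}" for S c
      proof (cases "S \<in> F")
        case True
        then show ?thesis using strict[OF True] b(2)[OF True, of c] by simp
      next
        case False
        then have "S = {} \<or> S = {..<d}" using that by (auto simp: F_def)
        then have "sum y S = sum p S" using y sum_p by (auto simp: hyperplane1_def)
        then show ?thesis using sum_le_support_line[OF that] by simp
      qed
    qed
  qed
qed

lemma interior_of_TP_orbit_iff:
  "r \<in> subtopology euclidean (hyperplane1 d) interior_of TP_orbit d g p \<longleftrightarrow> (\<nexists>S. tight_subset S)"
  using not_interior_if_tight_subset interior_if_no_tight_subset by blast

end

lemma frontier_of_iff_not_interior_of:
  "x \<in> A \<Longrightarrow> x \<in> topspace X \<Longrightarrow> x \<in> X frontier_of A \<longleftrightarrow> x \<notin> X interior_of A"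
  by (auto simp: frontier_of_def closure_of_def)

lemma positive_weights_gibbs:
  assumes "0 < d"
  shows "positive_weights d (gibbs d \<beta> E)"
proof -
  have "0 < Zf d \<beta> E" unfolding Zf_def qf_def using assms by (intro sum_pos) auto
  then show ?thesis
    by unfold_locales (simp_all add: gibbs_def qf_def Zf_def flip: sum_divide_distrib)
qed

theorem mainTheorem4:
  fixes d :: nat and \<beta> :: real and E :: "nat \<Rightarrow> real"
    and p r :: "nat \<Rightarrow> real" and \<pi>p \<pi>r :: "nat \<Rightarrow> nat"
  assumes "d \<ge> 2" and "\<beta> > 0"
    and "E 0 = 0" and "inj_on E {..<d}"
    and "is_state d p"
    and "r \<in> TP_orbit d (gibbs d \<beta> E) p"
    and "thermo_order d (gibbs d \<beta> E) p \<pi>p"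
    and "thermo_order d (gibbs d \<beta> E) r \<pi>r"
  shows "r \<in> (subtopology euclidean (hyperplane1 d)) frontier_of (TP_orbit d (gibbs d \<beta> E) p)
     \<longleftrightarrow> elbow_on_curve d (gibbs d \<beta> E) r \<pi>r p \<pi>p"
proof -
  interpret thermo_orbit d "gibbs d \<beta> E" p r \<pi>p \<pi>r
    using positive_weights_gibbs[of d \<beta> E] assms
    by (simp add: thermo_orbit_def thermo_orbit_axioms_def is_state_def)
  have "r \<in> subtopology euclidean (hyperplane1 d) frontier_of TP_orbit d (gibbs d \<beta> E) p
      \<longleftrightarrow> r \<notin> subtopology euclidean (hyperplane1 d) interior_of TP_orbit d (gibbs d \<beta> E) p"
    using r_orbit r_hyperplane1 by (simp add: frontier_of_iff_not_interior_of)
  also have "\<dots> \<longleftrightarrow> (\<exists>S. tight_subset S)"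
    using interior_of_TP_orbit_iff by simp
  also have "\<dots> \<longleftrightarrow> elbow_on_curve d (gibbs d \<beta> E) r \<pi>r p \<pi>p"
    using elbow_on_curve_iff_tight_subset by simp
  finally show ?thesis .
qed

end
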